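(* Let $0<\phi<\pi/6$, $T>0$, $F,h\in\mathcal A_\phi$, $j\in\{0,1,2,3\}$ and $\nu>2\rho_0+1$. Then for all $p\in\mathcal S_\phi$, $0\le t\le T$, $$\Big|\int_0^t\big\{(p^j[F+h])*B_{j,0}-(p^jF)*B_{j,0}\big\}(p,\tau)\,e^{-p^3(t-\tau)}\,d\tau\Big|\le\frac{C(\phi)T^{(3-j)/3}e^{\nu|p|}}{M_0(1+|p|^2)}\||B_{j,0}|*|h|\|_\nu,$$ with $C(\phi)$ depending only on $\phi$.
   Context: Let $\rho_0>0$; $b_{j,0}(y,t)$ is analytic in $y$ on $\{(y,t):\arg y\in(-2\pi/3,2\pi/3),|y|>\rho_0,0\le t\le T\}$ with $|y^{\alpha_j}b_{j,0}|<A_b(T)$ ($\alpha_j>0$), and $B_{j,0}(p,t)=\frac1{2\pi i}\int_{\mathcal C}e^{py}b_{j,0}(y,t)dy$, $\mathcal C=\{c+ire^{i\phi'\mathrm{sgn}(r)}:r\in\mathbb R\}$, $c$ large, $\phi<\phi'<\pi/6$. $\mathcal S_\phi=\{p:\arg p\in(-\phi,\phi),0<|p|<\infty\}$, $\mathcal K=\overline{\mathcal S_\phi}\times[0,T]$; $\|G\|_\nu=M_0\sup_{\mathcal K}(1+|p|^2)e^{-\nu|p|}|G(p,t)|$ (also for continuous functions on $\mathcal K$), $M_0=\sup_{s\ge0}\frac{2(1+s^2)(\ln(1+s^2)+s\arctan s)}{s(s^2+4)}$; $\mathcal A_\phi$: functions analytic in $p\in\mathcal S_\phi$, continuous on $\overline{\mathcal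 S_\phi}$ for each $t$, with finite norm. $(F*G)(p,t)=\int_0^pF(s,t)G(p-s,t)ds$ along $[0,p]$. For $p=|p|e^{i\theta}$, $(|B|*|h|)(p,t)=\int_0^{|p|}|B(se^{i\theta},t)||h(p-se^{i\theta},t)|ds$. *)

theory Defs
  imports "HOL-Complex_Analysis.Complex_Analysis"
begin

definition sector :: "real \<Rightarrow> complex set" where
  "sector \<phi> = {p. p \<noteq> 0 \<and> -\<phi> < Arg p \<and> Arg p < \<phi>}"

definition Kset :: "real \<Rightarrow> real \<Rightarrow> (complex \<times> real) set" where
  "Kset \<phi> T = closure (sector \<phi>) \<times> {0..T}"

text \<open>The constant M_0 (at s = 0 the quotient is 0 by HOL convention, harmless).\<close>
definition M0 :: real where
  "M0 = Sup {2 * (1 + s\<^sup>2) * (ln (1 + s\<^sup>2) + s * arctan s) / (s * (s\<^sup>2 + 4)) | s. s \<ge> 0}"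

text \<open>The weighted sup norm, valued in [0,\<infinity>] so that an infinite norm is representable.\<close>
definition nnorm_c :: "real \<Rightarrow> real \<Rightarrow> real \<Rightarrow> (complex \<Rightarrow> real \<Rightarrow> complex) \<Rightarrow> ennreal" where
  "nnorm_c \<phi> T \<nu> G = ennreal M0 *
     (SUP pt\<in>Kset \<phi> T. ennreal ((1 + (cmod (fst pt))\<^sup>2) * exp (- \<nu> * cmod (fst pt)) * cmod (G (fst pt) (snd pt))))"

definition nnorm_e :: "real \<Rightarrow> real \<Rightarrow> real \<Rightarrow> (complex \<Rightarrow> real \<Rightarrow> ennreal) \<Rightarrow> ennreal" where
  "nnorm_e \<phi> T \<nu> G = ennreal M0 *
     (SUP pt\<in>Kset \<phi> T. ennreal ((1 + (cmod (fst pt))\<^sup>2) * exp (- \<nu> * cmod (fst pt))) * G (fst pt) (snd pt))"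

definition A_space :: "real \<Rightarrow> real \<Rightarrow> real \<Rightarrow> (complex \<Rightarrow> real \<Rightarrow> complex) set" where
  "A_space \<phi> T \<nu> = {G. (\<forall>t\<in>{0..T}. (\<lambda>p. G p t) holomorphic_on sector \<phi>
                                  \<and> continuous_on (closure (sector \<phi>)) (\<lambda>p. G p t))
                      \<and> nnorm_c \<phi> T \<nu> G < \<infinity>}"

definition lconv :: "(complex \<Rightarrow> real \<Rightarrow> complex) \<Rightarrow> (complex \<Rightarrow> real \<Rightarrow> complex) \<Rightarrow> complex \<Rightarrow> real \<Rightarrow> complex" where
  "lconv F G p t = contour_integral (linepath 0 p) (\<lambda>s. F s t * G (p - s) t)"

definition abs_conv :: "(complex \<Rightarrow> real \<Rightarrow> complex) \<Rightarrow> (complex \<Rightarrow> real \<Rightarrow> complex) \<Rightarrow> complex \<Rightarrow> real \<Rightarrow> ennreal" where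
  "abs_conv B h p t = (\<integral>\<^sup>+ s\<in>{0..cmod p}.
      ennreal (cmod (B (of_real s * cis (Arg p)) t) * cmod (h (p - of_real s * cis (Arg p)) t)) \<partial>lborel)"

text \<open>Contour C = {c + i r e^{i phi' sgn r} : r real}, parametrised by r, with dy = i e^{i phi' sgn r} dr.\<close>
definition contC :: "real \<Rightarrow> real \<Rightarrow> real \<Rightarrow> complex" where
  "contC c \<phi>' r = of_real c + \<i> * of_real r * cis (\<phi>' * sgn r)"

definition Bfun :: "(complex \<Rightarrow> real \<Rightarrow> complex) \<Rightarrow> real \<Rightarrow> real \<Rightarrow> complex \<Rightarrow> real \<Rightarrow> complex" where
  "Bfun b c \<phi>' p t = 1 / (2 * of_real pi * \<i>) *
     (\<integral>r. exp (p * contC c \<phi>' r) * b (contC c \<phi>' r) t * (\<i> * cis (\<phi>' * sgn r)) \<partial>lborel)"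

definition bdom :: "real \<Rightarrow> complex set" where
  "bdom \<rho>0 = {y. -2*pi/3 < Arg y \<and> Arg y < 2*pi/3 \<and> cmod y > \<rho>0}"

end

theory Submission
  imports Defs
begin

(* Along the segment [0,p] the two convolutions differ by the convolution of p^j h with B, whose
   modulus is at most |p|^j (|B| * |h|)(p,\<tau>); the weighted norm bounds this pointwise by
   e^{\<nu>|p|} / (M0 (1 + |p|^2)) times the norm of |B| * |h|.  In the sector, Re p^3 \<ge> cos(3\<phi>) |p|^3,
   so the time integral contributes at most |p|^j min(t, 1 / (cos(3\<phi>) |p|^3)), and interpolating the
   two terms of the minimum with weights 1 - j/3 and j/3 gives T^{(3-j)/3} / cos(3\<phi>). *)

lemma Arg_bounds_two_thirds_pi:
  fixes y :: complex
  assumes "y \<noteq> 0" "sqrt 3 * Re y + \<bar>Im y\<bar> > 0"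
  shows "-2*pi/3 < Arg y \<and> Arg y < 2*pi/3"
proof (rule ccontr)
  assume "\<not> ?thesis"
  then have "2*pi/3 \<le> \<bar>Arg y\<bar>" by auto
  moreover have "\<bar>Arg y\<bar> \<le> pi" using Arg_bounded[of y] by auto
  ultimately have "cos \<bar>Arg y\<bar> \<le> cos (pi - pi/3)" by (intro cos_monotone_0_pi_le) auto
  also have "cos (pi - pi/3) = -1/2" by (simp only: cos_diff cos_pi sin_pi cos_60)
  finally have c: "cos (Arg y) \<le> -1/2" by simp
  have y: "Re y = cmod y * cos (Arg y)"
    using rcis_cmod_Arg[of y] by (metis Re_rcis)
  have n: "cmod y > 0" using assms by simp
  have "cmod y * cos (Arg y) \<le> cmod y * (-1/2)" using c n by (intro mult_left_mono) auto
  then have r: "Re y \<le> - cmod y / 2" using y by simp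
  have "(Im y)^2 = (cmod y)^2 - (Re y)^2" by (simp add: cmod_power2)
  also have "\<dots> \<le> (sqrt 3 * Re y)^2"
    using power_mono[of "cmod y" "- 2 * Re y" 2] r n by (simp add: power_mult_distrib)
  finally have "\<bar>Im y\<bar> \<le> \<bar>sqrt 3 * Re y\<bar>" using abs_le_square_iff by blast
  moreover have "Re y \<le> 0" using r n by linarith
  then have "sqrt 3 * Re y \<le> 0" by (simp add: mult_nonneg_nonpos)
  ultimately show False using assms(2) by linarith
qed

lemma Re_contC: "Re (contC c \<phi>' r) = c - \<bar>r\<bar> * sin \<phi>'"
  and Im_contC: "Im (contC c \<phi>' r) = r * cos \<phi>'"
  by (cases "r > 0"; cases "r < 0"; simp add: contC_def cis.ctr sgn_if)+

lemma contC_in_bdom: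
  assumes "0 < \<phi>'" "\<phi>' < pi/6" "\<rho>0 < c * cos \<phi>'" "0 < \<rho>0"
  shows "contC c \<phi>' r \<in> bdom \<rho>0"
proof -
  let ?y = "contC c \<phi>' r"
  have "sin \<phi>' < sin (pi/6)" using assms by (intro sin_monotone_2pi) auto
  then have sin: "sin \<phi>' < 1/2" by (simp add: sin_30)
  have "cos (pi/6) < cos \<phi>'" using assms by (intro cos_monotone_0_pi) auto
  then have cos: "sqrt 3 / 2 < cos \<phi>'" by (simp add: cos_30)
  moreover have "(0::real) < sqrt 3 / 2" by simp
  ultimately have cos_pos: "0 < cos \<phi>'" by linarith
  have c: "0 < c"
  proof (rule ccontr)
    assume "\<not> 0 < c"
    then have "c * cos \<phi>' \<le> 0" using cos_pos by (simp add: mult_nonpos_nonneg)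
    then show False using assms by linarith
  qed
  have "sqrt 3 * sin \<phi>' \<le> sqrt 3 * (1/2)" using sin by (intro mult_left_mono) auto
  then have slope: "sqrt 3 * sin \<phi>' < cos \<phi>'" using cos by linarith
  have "(cmod ?y)^2 = (c - \<bar>r\<bar> * sin \<phi>')^2 + (r * cos \<phi>')^2"
    by (simp add: cmod_power2 Re_contC Im_contC)
  also have "\<dots> = (c * cos \<phi>')^2 + (c * sin \<phi>' - \<bar>r\<bar>)^2"
    using sin_cos_squared_add[of \<phi>'] power2_abs[of r] by algebra
  finally have "(c * cos \<phi>')^2 \<le> (cmod ?y)^2" by simp
  then have "c * cos \<phi>' \<le> cmod ?y" by (rule power2_le_imp_le) simp
  then have norm: "\<rho>0 < cmod ?y" using assms by linarith
  then have "?y \<noteq> 0" using assms by auto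
  moreover have "sqrt 3 * Re ?y + \<bar>Im ?y\<bar> = sqrt 3 * c + \<bar>r\<bar> * (cos \<phi>' - sqrt 3 * sin \<phi>')"
    using cos_pos by (simp add: Re_contC Im_contC abs_mult algebra_simps)
  moreover have "0 < sqrt 3 * c + \<bar>r\<bar> * (cos \<phi>' - sqrt 3 * sin \<phi>')"
    using slope c by (intro add_pos_nonneg) auto
  ultimately have "-2*pi/3 < Arg ?y \<and> Arg ?y < 2*pi/3"
    by (intro Arg_bounds_two_thirds_pi) auto
  with norm show ?thesis unfolding bdom_def by auto
qed

lemma continuous_on_contC: "continuous_on (- {0}) (contC c \<phi>')"
proof -
  have pos: "continuous_on {0<..} (contC c \<phi>')"
    by (rule continuous_on_eq[of _ "\<lambda>r. of_real c + \<i> * of_real r * cis \<phi>'"])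
      (auto intro!: continuous_intros simp: contC_def)
  have neg: "continuous_on {..<0} (contC c \<phi>')"
    by (rule continuous_on_eq[of _ "\<lambda>r. of_real c + \<i> * of_real r * cis (- \<phi>')"])
      (auto intro!: continuous_intros simp: contC_def)
  have "- {0::real} = {..<0} \<union> {0<..}" by auto
  with continuous_on_open_Un[OF _ _ neg pos] show ?thesis by simp
qed

lemma borel_measurable_cis [measurable]: "cis \<in> borel_measurable borel"
  by (intro borel_measurable_continuous_onI continuous_intros)

lemma borel_measurable_contC [measurable]: "contC c \<phi>' \<in> borel_measurable borel"
  unfolding contC_def by measurable

lemma borel_measurable_comp_contC:
  assumes "continuous_on (bdom \<rho>0) g" "0 < \<phi>'" "\<phi>' < pi/6" "\<rho>0 < c * cos \<phi>'" "0 < \<rho>0"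
  shows "(\<lambda>r. g (contC c \<phi>' r)) \<in> borel_measurable borel"
proof (rule borel_measurable_continuous_countable_exceptions[of "{0}"])
  show "continuous_on (- {0}) (\<lambda>r. g (contC c \<phi>' r))"
    using assms(2-) by (intro continuous_on_compose2[OF assms(1) continuous_on_contC]) (auto intro: contC_in_bdom)
qed simp

(* Measurability of B in p is what lets the contour integral defining the convolution be
   dominated by the Lebesgue integral defining |B| * |h|. *)
lemma borel_measurable_Bfun:
  assumes b: "(\<lambda>y. b y \<tau>) holomorphic_on bdom \<rho>0"
    and C: "0 < \<phi>'" "\<phi>' < pi/6" "\<rho>0 < c * cos \<phi>'" "0 < \<rho>0"
  shows "(\<lambda>q. Bfun b c \<phi>' q \<tau>) \<in> borel_measurable borel"
proof -
  note [measurable] = borel_measurable_comp_contC[OF holomorphic_on_imp_continuous_on[OF b] C]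
  have "(\<lambda>q. \<integral>r. exp (q * contC c \<phi>' r) * b (contC c \<phi>' r) \<tau> * (\<i> * cis (\<phi>' * sgn r)) \<partial>lborel)
          \<in> borel_measurable borel"
    by (rule lborel.borel_measurable_lebesgue_integral) measurable
  then show ?thesis unfolding Bfun_def by measurable
qed

lemma of_real_mult_in_closed_segment:
  "0 \<le> u \<Longrightarrow> u \<le> 1 \<Longrightarrow> of_real u * p \<in> closed_segment 0 (p::complex)"
  unfolding closed_segment_def by (auto simp: scaleR_conv_of_real)

lemma diff_of_real_cis_Arg_in_closed_segment:
  assumes "0 \<le> s" "s \<le> cmod p"
  shows "p - of_real s * cis (Arg p) \<in> closed_segment 0 p"
proof (cases "p = 0")
  case True
  then show ?thesis using assms by simp
next
  case False
  define R e where "R = cmod p" and "e = cis (Arg p)"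
  have R: "0 < R" using False by (simp add: R_def)
  have pe: "p = of_real R * e" using rcis_cmod_Arg[of p] by (simp add: R_def e_def rcis_def)
  have "p - of_real s * e = of_real (1 - s / R) * p"
    using R by (simp add: pe field_simps)
  also have "\<dots> \<in> closed_segment 0 p"
    using assms R by (intro of_real_mult_in_closed_segment) (auto simp: R_def)
  finally show ?thesis by (simp add: e_def)
qed

lemma closed_segment_subset_closure_sector:
  assumes "p \<in> sector \<phi>"
  shows "closed_segment 0 p \<subseteq> closure (sector \<phi>)"
proof -
  have p: "p \<noteq> 0" using assms by (simp add: sector_def)
  have "open_segment 0 p \<subseteq> sector \<phi>"
  proof
    fix x assume x: "x \<in> open_segment 0 p"
    then obtain u where u: "0 \<le> u" "x = u *\<^sub>R p" and x0: "x \<noteq> 0"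
      unfolding open_segment_def closed_segment_def by auto
    then have "0 < u" by (cases "u = 0") auto
    then show "x \<in> sector \<phi>" using assms u x0 by (simp add: sector_def scaleR_conv_of_real)
  qed
  then have "closure (open_segment 0 p) \<subseteq> closure (sector \<phi>)" by (rule closure_mono)
  with p show ?thesis by simp
qed

(* The substitution s = |p| (1 - x) turns the parametrised convolution integrand over [0,1]
   into the integrand of |B| * |h| over [0, |p|]. *)
lemma nn_integral_linepath_conv_le:
  fixes B h :: "complex \<Rightarrow> real \<Rightarrow> complex"
  assumes p: "p \<noteq> 0" and h: "continuous_on (closed_segment 0 p) (\<lambda>s. h s \<tau>)"
    and B: "(\<lambda>q. B q \<tau>) \<in> borel_measurable borel"
  shows "(\<integral>\<^sup>+x. ennreal (norm (indicator {0..1} x *\<^sub>R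
            ((of_real x * p) ^ j * h (of_real x * p) \<tau> * B (p - of_real x * p) \<tau> * p))) \<partial>lborel)
         \<le> ennreal (cmod p ^ j) * abs_conv B h p \<tau>"
    (is "(\<integral>\<^sup>+x. ennreal (norm (indicator {0..1} x *\<^sub>R ?W x)) \<partial>lborel) \<le> _")
proof -
  define R e where "R = cmod p" and "e = cis (Arg p)"
  have R: "0 < R" using p by (simp add: R_def)
  have pe: "p = of_real R * e" using rcis_cmod_Arg[of p] by (simp add: R_def e_def rcis_def)
  have [measurable]: "(\<lambda>s. indicator {0..R} s *\<^sub>R h (p - of_real s * e) \<tau>) \<in> borel_measurable borel"
  proof (rule borel_measurable_continuous_on_indicator)
    show "continuous_on {0..R} (\<lambda>s. h (p - of_real s * e) \<tau>)"
      by (rule continuous_on_compose2[OF h])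
        (auto intro!: continuous_intros diff_of_real_cis_Arg_in_closed_segment simp: R_def e_def)
  qed simp
  note [measurable] = B
  define G where "G s = ennreal (cmod (B (of_real s * e) \<tau>) * cmod (indicator {0..R} s *\<^sub>R h (p - of_real s * e) \<tau>))"
    for s
  have [measurable]: "G \<in> borel_measurable borel" unfolding G_def by measurable
  have "abs_conv B h p \<tau> = (\<integral>\<^sup>+ s. G s \<partial>lborel)"
    unfolding abs_conv_def G_def R_def[symmetric] e_def[symmetric]
    by (intro nn_integral_cong) (auto simp: indicator_def)
  also have "\<dots> = ennreal R * (\<integral>\<^sup>+ x. G (R + (-R) * x) \<partial>lborel)"
    using nn_integral_real_affine[of G "-R" R] R by simp
  finally have conv: "abs_conv B h p \<tau> = ennreal R * (\<integral>\<^sup>+ x. G (R + (-R) * x) \<partial>lborel)" .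
  have pointwise: "ennreal (norm (indicator {0..1} x *\<^sub>R ?W x)) \<le> ennreal (R^(j+1)) * G (R + (-R) * x)" for x
  proof (cases "x \<in> {0..1}")
    case True
    define y where "y = R + (-R) * x"
    have y: "p - of_real x * p = of_real y * e" "of_real x * p = p - of_real y * e" "y \<in> {0..R}"
      using True R by (auto simp: y_def pe algebra_simps mult_le_cancel_left1)
    have "norm (indicator {0..1} x *\<^sub>R ?W x) = (x * R)^j * cmod (h (of_real x * p) \<tau>) * cmod (B (p - of_real x * p) \<tau>) * R"
      using True by (simp add: norm_mult norm_power R_def)
    also have "\<dots> \<le> R^j * cmod (h (of_real x * p) \<tau>) * cmod (B (p - of_real x * p) \<tau>) * R"
      using True R by (intro mult_right_mono power_mono) (auto simp: mult_le_cancel_right1)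
    also have "\<dots> = R^(j+1) * (cmod (B (of_real y * e) \<tau>) * cmod (indicator {0..R} y *\<^sub>R h (p - of_real y * e) \<tau>))"
      by (simp only: y(1,2) indicator_simps(1)[OF y(3)]) (simp add: algebra_simps)
    finally show ?thesis using R by (simp add: G_def y_def ennreal_mult[symmetric] ennreal_leI)
  qed simp
  have "(\<integral>\<^sup>+x. ennreal (norm (indicator {0..1} x *\<^sub>R ?W x)) \<partial>lborel)
        \<le> (\<integral>\<^sup>+x. ennreal (R^(j+1)) * G (R + (-R) * x) \<partial>lborel)"
    by (intro nn_integral_mono pointwise)
  also have "\<dots> = ennreal (R^(j+1)) * (\<integral>\<^sup>+x. G (R + (-R) * x) \<partial>lborel)"
    by (rule nn_integral_cmult) measurable
  also have "\<dots> = ennreal (cmod p ^ j) * abs_conv B h p \<tau>"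
    using R by (simp add: conv R_def ennreal_mult mult_ac)
  finally show ?thesis .
qed

lemma has_contour_integral_linepath_conv:
  fixes B h :: "complex \<Rightarrow> real \<Rightarrow> complex"
  assumes p: "p \<noteq> 0" and h: "continuous_on (closed_segment 0 p) (\<lambda>s. h s \<tau>)"
    and B: "(\<lambda>q. B q \<tau>) \<in> borel_measurable borel"
    and finite: "abs_conv B h p \<tau> \<noteq> \<infinity>"
  obtains z where "((\<lambda>s. s ^ j * h s \<tau> * B (p - s) \<tau>) has_contour_integral z) (linepath 0 p)"
    and "ennreal (norm z) \<le> ennreal (cmod p ^ j) * abs_conv B h p \<tau>"
proof -
  define W where "W x = (of_real x * p) ^ j * h (of_real x * p) \<tau> * B (p - of_real x * p) \<tau> * p" for x :: real
  note bound = nn_integral_linepath_conv_le[where h=h and B=B and \<tau>=\<tau> and j=j, OF p h B, folded W_def]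
  have [measurable]: "(\<lambda>x. indicator {0..1} x *\<^sub>R h (of_real x * p) \<tau>) \<in> borel_measurable borel"
    by (rule borel_measurable_continuous_on_indicator)
      (auto intro!: continuous_on_compose2[OF h] continuous_intros of_real_mult_in_closed_segment)
  note [measurable] = B
  have "(\<lambda>x. indicator {0..1} x *\<^sub>R W x)
        = (\<lambda>x. (indicator {0..1} x *\<^sub>R h (of_real x * p) \<tau>) * ((of_real x * p) ^ j * B (p - of_real x * p) \<tau> * p))"
    by (auto simp: W_def indicator_def)
  then have "(\<lambda>x. indicator {0..1} x *\<^sub>R W x) \<in> borel_measurable lborel" by (simp only:) measurable
  moreover have "(\<integral>\<^sup>+x. ennreal (norm (indicator {0..1} x *\<^sub>R W x)) \<partial>lborel) < \<infinity>"
    using bound finite by (auto simp: ennreal_mult_less_top top.not_eq_extremum intro: le_less_trans)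
  ultimately have int: "integrable lborel (\<lambda>x. indicator {0..1} x *\<^sub>R W x)"
    by (rule integrableI_bounded)
  then have W: "set_integrable lborel {0..1} W" unfolding set_integrable_def .
  show thesis
  proof
    have "(\<lambda>x. linepath 0 p x ^ j * h (linepath 0 p x) \<tau> * B (p - linepath 0 p x) \<tau> * (p - 0)) = W"
      by (auto simp: W_def linepath_def scaleR_conv_of_real)
    then show "((\<lambda>s. s ^ j * h s \<tau> * B (p - s) \<tau>) has_contour_integral integral {0..1} W) (linepath 0 p)"
      using set_borel_integral_eq_integral(1)[OF W]
      by (simp add: has_contour_integral_linepath has_integral_integral)
    have "ennreal (norm (integral {0..1} W)) = ennreal (norm (LINT x:{0..1}|lborel. W x))"
      using set_borel_integral_eq_integral(2)[OF W] by simp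
    also have "\<dots> \<le> (\<integral>\<^sup>+x. ennreal (norm (indicator {0..1} x *\<^sub>R W x)) \<partial>lborel)"
      unfolding set_lebesgue_integral_def by (rule integral_norm_bound_ennreal[OF int])
    finally show "ennreal (norm (integral {0..1} W)) \<le> ennreal (cmod p ^ j) * abs_conv B h p \<tau>"
      using bound by simp
  qed
qed

(* If f is not integrable then neither is f + w, and both contour integrals are 0 by convention. *)
lemma norm_contour_integral_add_diff_le:
  assumes "w contour_integrable_on g"
  shows "norm (contour_integral g (\<lambda>s. f s + w s) - contour_integral g f) \<le> norm (contour_integral g w)"
proof (cases "f contour_integrable_on g")
  case True
  then show ?thesis using assms by (simp add: contour_integral_add)
next
  case False
  have "\<not> (\<lambda>s. f s + w s) contour_integrable_on g"
  proof
    assume "(\<lambda>s. f s + w s) contour_integrable_on g"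
    from contour_integrable_diff[OF this assms] False show False by simp
  qed
  with False show ?thesis by (simp add: not_integrable_contour_integral)
qed

lemma norm_lconv_diff_le_abs_conv:
  fixes B F h :: "complex \<Rightarrow> real \<Rightarrow> complex"
  assumes p: "p \<noteq> 0" and h: "continuous_on (closed_segment 0 p) (\<lambda>s. h s \<tau>)"
    and B: "(\<lambda>q. B q \<tau>) \<in> borel_measurable borel"
  shows "ennreal (norm (lconv (\<lambda>s \<tau>. s ^ j * (F s \<tau> + h s \<tau>)) B p \<tau> - lconv (\<lambda>s \<tau>. s ^ j * F s \<tau>) B p \<tau>))
         \<le> ennreal (cmod p ^ j) * abs_conv B h p \<tau>"
proof (cases "abs_conv B h p \<tau> = \<infinity>")
  case True
  then show ?thesis using p by (simp add: ennreal_mult_top)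
next
  case False
  then obtain z where z: "((\<lambda>s. s ^ j * h s \<tau> * B (p - s) \<tau>) has_contour_integral z) (linepath 0 p)"
    and bound: "ennreal (norm z) \<le> ennreal (cmod p ^ j) * abs_conv B h p \<tau>"
    by (rule has_contour_integral_linepath_conv[where h=h and B=B and \<tau>=\<tau>, OF p h B])
  have split: "(\<lambda>s. s ^ j * (F s \<tau> + h s \<tau>) * B (p - s) \<tau>)
        = (\<lambda>s. s ^ j * F s \<tau> * B (p - s) \<tau> + s ^ j * h s \<tau> * B (p - s) \<tau>)"
    by (simp add: algebra_simps)
  have "norm (lconv (\<lambda>s \<tau>. s ^ j * (F s \<tau> + h s \<tau>)) B p \<tau> - lconv (\<lambda>s \<tau>. s ^ j * F s \<tau>) B p \<tau>)
        \<le> norm (contour_integral (linepath 0 p) (\<lambda>s. s ^ j * h s \<tau> * B (p - s) \<tau>))"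
    unfolding lconv_def split
    by (rule norm_contour_integral_add_diff_le) (use z in \<open>auto simp: contour_integrable_on_def\<close>)
  also have "\<dots> = norm z" using z by (simp add: contour_integral_unique)
  finally show ?thesis using bound by (meson ennreal_leI order_trans)
qed

lemma min_le_powr_interpolation:
  fixes x y \<beta> :: real
  assumes "0 \<le> x" "0 \<le> y" "0 \<le> \<beta>" "\<beta> \<le> 1"
  shows "min x y \<le> x powr (1 - \<beta>) * y powr \<beta>"
proof (cases "min x y = 0")
  case True
  then show ?thesis by simp
next
  case False
  then have m: "0 < min x y" using assms by linarith
  have "min x y = min x y powr (1 - \<beta>) * min x y powr \<beta>"
    using m by (simp add: powr_add[symmetric])
  also have "\<dots> \<le> x powr (1 - \<beta>) * y powr \<beta>"
    using assms m by (intro mult_mono powr_mono2) auto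
  finally show ?thesis .
qed

lemma one_minus_exp_divide_le_min:
  fixes a t :: real
  assumes "0 < a" "0 \<le> t"
  shows "(1 - exp (- a * t)) / a \<le> min t (1 / a)"
  using exp_ge_add_one_self[of "- a * t"] assms by (auto simp: pos_divide_le_eq mult.commute)

lemma power_mult_exp_decay_le:
  fixes k R t T :: real and j :: nat
  assumes k: "0 < k" "k \<le> 1" and R: "0 < R" and t: "0 \<le> t" "t \<le> T" and j: "j \<le> 3"
  shows "R ^ j * ((1 - exp (- (k * R ^ 3) * t)) / (k * R ^ 3)) \<le> T powr ((3 - real j) / 3) / k"
proof -
  define \<beta> where "\<beta> = real j / 3"
  have \<beta>: "0 \<le> \<beta>" "\<beta> \<le> 1" "(3 - real j) / 3 = 1 - \<beta>" using j by (auto simp: \<beta>_def field_simps)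
  have a: "0 < k * R ^ 3" using k R by simp
  have "(R ^ 3) powr \<beta> = R powr (3 * \<beta>)" using R by (simp add: powr_powr[symmetric])
  also have "\<dots> = R ^ j" using R by (simp add: \<beta>_def powr_realpow)
  finally have "(1 / (k * R ^ 3)) powr \<beta> = (1 / k) powr \<beta> / R ^ j"
    using k R by (simp add: powr_divide powr_mult)
  then have cancel: "R ^ j * (1 / (k * R ^ 3)) powr \<beta> = (1 / k) powr \<beta>"
    using R by simp
  have "R ^ j * ((1 - exp (- (k * R ^ 3) * t)) / (k * R ^ 3)) \<le> R ^ j * (t powr (1 - \<beta>) * (1 / (k * R ^ 3)) powr \<beta>)"
    using one_minus_exp_divide_le_min[OF a t(1)] min_le_powr_interpolation[of t "1 / (k * R ^ 3)" \<beta>] a t \<beta> R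
    by (intro mult_left_mono) auto
  also have "\<dots> = t powr (1 - \<beta>) * (1 / k) powr \<beta>"
    using cancel by (simp add: mult_ac)
  also have "\<dots> \<le> T powr (1 - \<beta>) * (1 / k)"
    using powr_mono2[of "1 - \<beta>" t T] powr_mono[of \<beta> 1 "1 / k"] k t \<beta> by (intro mult_mono) auto
  finally show ?thesis unfolding \<beta>(3) by simp
qed

lemma has_integral_exp_decay:
  fixes a t :: real
  assumes a: "0 < a" and t: "0 \<le> t"
  shows "((\<lambda>\<tau>. exp (- a * (t - \<tau>))) has_integral ((1 - exp (- a * t)) / a)) {0..t}"
proof -
  have "((\<lambda>\<tau>. exp (- a * (t - \<tau>))) has_integral
         (\<lambda>\<tau>. exp (- a * (t - \<tau>)) / a) t - (\<lambda>\<tau>. exp (- a * (t - \<tau>)) / a) 0) {0..t}"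
  proof (rule fundamental_theorem_of_calculus[OF t])
    fix x assume "x \<in> {0..t}"
    show "((\<lambda>\<tau>. exp (- a * (t - \<tau>)) / a) has_vector_derivative exp (- a * (t - x))) (at x within {0..t})"
      unfolding has_real_derivative_iff_has_vector_derivative[symmetric] using a
      by (auto intro!: derivative_eq_intros simp: field_simps)
  qed
  then show ?thesis by (simp add: diff_divide_distrib)
qed

lemma Re_power3_ge:
  assumes "p \<in> sector \<phi>" "0 < \<phi>" "\<phi> < pi/6"
  shows "cos (3 * \<phi>) * cmod p ^ 3 \<le> Re (p ^ 3)"
proof -
  have a: "-\<phi> < Arg p" "Arg p < \<phi>" using assms(1) by (auto simp: sector_def)
  have "p ^ 3 = rcis (cmod p ^ 3) (real 3 * Arg p)" by (metis DeMoivre2 rcis_cmod_Arg)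
  then have r: "Re (p ^ 3) = cmod p ^ 3 * cos (3 * Arg p)" by (simp add: rcis_def)
  have "cos (3 * \<phi>) \<le> cos \<bar>3 * Arg p\<bar>" using a assms by (intro cos_monotone_0_pi_le) auto
  then show ?thesis unfolding r by (simp add: mult.commute mult_left_mono)
qed

lemma norm_integral_exp_cube_le:
  fixes D :: "real \<Rightarrow> complex"
  assumes \<phi>: "0 < \<phi>" "\<phi> < pi / 6" and p: "p \<in> sector \<phi>" and t: "0 \<le> t" "t \<le> T" and j: "j \<le> 3"
    and K: "0 \<le> K" and D: "\<And>\<tau>. \<tau> \<in> {0..t} \<Longrightarrow> norm (D \<tau>) \<le> K * cmod p ^ j"
  shows "norm (integral {0..t} (\<lambda>\<tau>. D \<tau> * exp (- (p ^ 3) * of_real (t - \<tau>))))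
         \<le> K * (T powr ((3 - real j) / 3) / cos (3 * \<phi>))"
proof -
  define k a where "k = cos (3 * \<phi>)" and "a = k * cmod p ^ 3"
  have k: "0 < k" "k \<le> 1" using \<phi> by (auto simp: k_def intro!: cos_gt_zero_pi)
  have p0: "p \<noteq> 0" using p by (simp add: sector_def)
  then have a: "0 < a" using k by (simp add: a_def)
  define g where "g \<tau> = K * cmod p ^ j * exp (- a * (t - \<tau>))" for \<tau>
  have g: "(g has_integral K * cmod p ^ j * ((1 - exp (- a * t)) / a)) {0..t}"
    unfolding g_def by (intro has_integral_mult_right has_integral_exp_decay a t)
  have pointwise: "norm (D \<tau> * exp (- (p ^ 3) * of_real (t - \<tau>))) \<le> g \<tau>" if \<tau>: "\<tau> \<in> {0..t}" for \<tau>
  proof -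
    have "a * (t - \<tau>) \<le> Re (p ^ 3) * (t - \<tau>)"
      using Re_power3_ge[OF p \<phi>] \<tau> by (intro mult_right_mono) (auto simp: a_def k_def)
    then have "norm (exp (- (p ^ 3) * of_real (t - \<tau>))) \<le> exp (- a * (t - \<tau>))"
      by (simp add: norm_exp_eq_Re)
    then show ?thesis
      unfolding g_def norm_mult using D[OF \<tau>] K by (intro mult_mono) auto
  qed
  have "norm (integral {0..t} (\<lambda>\<tau>. D \<tau> * exp (- (p ^ 3) * of_real (t - \<tau>)))) \<le> integral {0..t} g"
  proof (cases "(\<lambda>\<tau>. D \<tau> * exp (- (p ^ 3) * of_real (t - \<tau>))) integrable_on {0..t}")
    case True
    then show ?thesis using g pointwise by (intro integral_norm_bound_integral) auto
  next
    case False
    then show ?thesis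
      using g K by (auto simp: not_integrable_integral g_def intro!: integral_nonneg)
  qed
  also have "\<dots> = K * (cmod p ^ j * ((1 - exp (- a * t)) / a))"
    using g by (simp add: integral_unique mult.assoc)
  also have "\<dots> \<le> K * (T powr ((3 - real j) / 3) / k)"
    using power_mult_exp_decay_le[OF k _ t j, of "cmod p"] p0 K by (intro mult_left_mono) (auto simp: a_def)
  finally show ?thesis by (simp add: k_def)
qed

lemma M0_pos: "0 < M0"
proof -
  define f where "f s = 2 * (1 + s\<^sup>2) * (ln (1 + s\<^sup>2) + s * arctan s) / (s * (s\<^sup>2 + 4))" for s :: real
  have bounded: "f s \<le> 8" if "0 \<le> s" for s
  proof (cases "s = 0")
    case True
    then show ?thesis by (simp add: f_def)
  next
    case False
    with that have s: "0 < s" by simp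
    have "0 < 1 + s\<^sup>2" by (simp add: add_pos_nonneg)
    then have "ln (1 + s\<^sup>2) \<le> ln ((1 + s)^2)" using s by (intro ln_mono) (auto simp: power2_eq_square algebra_simps)
    also have "\<dots> \<le> 2 * s" using ln_add_one_self_le_self[of s] s by (simp add: ln_realpow)
    finally have "ln (1 + s\<^sup>2) \<le> 2 * s" .
    moreover have "s * arctan s \<le> s * 2"
      using arctan_ubound[of s] pi_less_4 s by (intro mult_left_mono) auto
    ultimately have "2 * (1 + s\<^sup>2) * (ln (1 + s\<^sup>2) + s * arctan s) \<le> 2 * (1 + s\<^sup>2) * (4 * s)"
      by (intro mult_left_mono) auto
    also have "\<dots> \<le> 8 * (s * (s\<^sup>2 + 4))" using s by (simp add: algebra_simps power2_eq_square)
    finally show ?thesis using s by (simp add: f_def pos_divide_le_eq add_nonneg_pos)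
  qed
  have "f 1 \<le> Sup {f s | s. 0 \<le> s}"
    using bounded by (intro cSup_upper) (auto intro!: bdd_aboveI[of _ 8])
  moreover have "0 < f 1" by (simp add: f_def arctan_one add_pos_pos)
  ultimately show ?thesis by (simp add: M0_def f_def)
qed

lemma nnorm_e_ge:
  assumes "(q, \<tau>) \<in> Kset \<phi> T"
  shows "ennreal (M0 * ((1 + (cmod q)\<^sup>2) * exp (- \<nu> * cmod q))) * G q \<tau> \<le> nnorm_e \<phi> T \<nu> G"
proof -
  have "ennreal ((1 + (cmod q)\<^sup>2) * exp (- \<nu> * cmod q)) * G q \<tau>
        \<le> (SUP pt\<in>Kset \<phi> T. ennreal ((1 + (cmod (fst pt))\<^sup>2) * exp (- \<nu> * cmod (fst pt))) * G (fst pt) (snd pt))"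
    using SUP_upper[OF assms, of "\<lambda>pt. ennreal ((1 + (cmod (fst pt))\<^sup>2) * exp (- \<nu> * cmod (fst pt))) * G (fst pt) (snd pt)"]
    by simp
  then show ?thesis
    unfolding nnorm_e_def using M0_pos by (simp add: ennreal_mult mult.assoc mult_left_mono)
qed

lemma norm_integral_lconv_diff_le:
  fixes B F h :: "complex \<Rightarrow> real \<Rightarrow> complex"
  assumes \<phi>: "0 < \<phi>" "\<phi> < pi / 6" and p: "p \<in> sector \<phi>" and T: "0 < T" and t: "0 \<le> t" "t \<le> T"
    and j: "j \<le> 3"
    and B: "\<And>\<tau>. \<tau> \<in> {0..T} \<Longrightarrow> (\<lambda>q. B q \<tau>) \<in> borel_measurable borel"
    and h: "\<And>\<tau>. \<tau> \<in> {0..T} \<Longrightarrow> continuous_on (closure (sector \<phi>)) (\<lambda>s. h s \<tau>)"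
  shows "ennreal (cmod (integral {0..t} (\<lambda>\<tau>.
           (lconv (\<lambda>s \<tau>. s ^ j * (F s \<tau> + h s \<tau>)) B p \<tau> - lconv (\<lambda>s \<tau>. s ^ j * F s \<tau>) B p \<tau>)
           * exp (- (p ^ 3) * of_real (t - \<tau>)))))
         \<le> ennreal (1 / cos (3 * \<phi>) * T powr ((3 - real j) / 3) * exp (\<nu> * cmod p) / (M0 * (1 + (cmod p)\<^sup>2)))
           * nnorm_e \<phi> T \<nu> (abs_conv B h)"
proof -
  define D where "D \<tau> = lconv (\<lambda>s \<tau>. s ^ j * (F s \<tau> + h s \<tau>)) B p \<tau> - lconv (\<lambda>s \<tau>. s ^ j * F s \<tau>) B p \<tau>" for \<tau>
  define w where "w = M0 * ((1 + (cmod p)\<^sup>2) * exp (- \<nu> * cmod p))"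
  define N where "N = nnorm_e \<phi> T \<nu> (abs_conv B h)"
  have p0: "p \<noteq> 0" using p by (simp add: sector_def)
  have w: "0 < w" using M0_pos by (simp add: w_def add_pos_nonneg)
  have k: "0 < cos (3 * \<phi>)" using \<phi> by (intro cos_gt_zero_pi) auto
  have D_le: "ennreal (w * norm (D \<tau>)) \<le> ennreal (cmod p ^ j) * N" if \<tau>: "\<tau> \<in> {0..T}" for \<tau>
  proof -
    have K: "(p, \<tau>) \<in> Kset \<phi> T" using p \<tau> closure_subset by (auto simp: Kset_def)
    have h_seg: "continuous_on (closed_segment 0 p) (\<lambda>s. h s \<tau>)"
      using h[OF \<tau>] closed_segment_subset_closure_sector[OF p] by (rule continuous_on_subset)
    have "ennreal (w * norm (D \<tau>)) = ennreal w * ennreal (norm (D \<tau>))" using w by (simp add: ennreal_mult)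
    also have "\<dots> \<le> ennreal w * (ennreal (cmod p ^ j) * abs_conv B h p \<tau>)"
      unfolding D_def by (intro mult_left_mono norm_lconv_diff_le_abs_conv[where h=h and B=B and \<tau>=\<tau>, OF p0 h_seg B[OF \<tau>]]) simp
    also have "\<dots> = ennreal (cmod p ^ j) * (ennreal w * abs_conv B h p \<tau>)" by (simp add: mult_ac)
    also have "\<dots> \<le> ennreal (cmod p ^ j) * N"
      unfolding N_def w_def by (intro mult_left_mono nnorm_e_ge[OF K]) simp
    finally show ?thesis .
  qed
  show ?thesis
  proof (cases N)
    case (real NR)
    have "norm (D \<tau>) \<le> NR / w * cmod p ^ j" if \<tau>: "\<tau> \<in> {0..t}" for \<tau>
    proof -
      have "ennreal (w * norm (D \<tau>)) \<le> ennreal (cmod p ^ j * NR)"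
        using D_le[of \<tau>] \<tau> t real by (simp add: ennreal_mult)
      then have "w * norm (D \<tau>) \<le> cmod p ^ j * NR" using real by (simp add: ennreal_le_iff)
      then show ?thesis using w by (simp add: field_simps)
    qed
    then have "cmod (integral {0..t} (\<lambda>\<tau>. D \<tau> * exp (- (p ^ 3) * of_real (t - \<tau>))))
               \<le> NR / w * (T powr ((3 - real j) / 3) / cos (3 * \<phi>))"
      using real w by (intro norm_integral_exp_cube_le[OF \<phi> p t j]) auto
    also have "\<dots> = 1 / cos (3 * \<phi>) * T powr ((3 - real j) / 3) * exp (\<nu> * cmod p) / (M0 * (1 + (cmod p)\<^sup>2)) * NR"
      by (simp add: w_def exp_minus field_simps)
    finally show ?thesis
      using real k M0_pos T by (simp add: D_def N_def[symmetric] ennreal_mult[symmetric] ennreal_leI)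
  next
    case top
    have "0 < 1 / cos (3 * \<phi>) * T powr ((3 - real j) / 3) * exp (\<nu> * cmod p) / (M0 * (1 + (cmod p)\<^sup>2))"
      using k T M0_pos by (simp add: add_pos_nonneg)
    then show ?thesis unfolding N_def[symmetric] top by (subst ennreal_top_mult_left) auto
  qed
qed

theorem lemma17:
  fixes \<phi> :: real
  assumes "0 < \<phi>" "\<phi> < pi / 6"
  shows "\<exists>C::real. \<forall>T \<rho>0 \<phi>' c (b :: complex \<Rightarrow> real \<Rightarrow> complex) \<alpha> A F h (j::nat) \<nu> p t.
     T > 0 \<longrightarrow> \<rho>0 > 0 \<longrightarrow> \<phi> < \<phi>' \<longrightarrow> \<phi>' < pi / 6 \<longrightarrow> c * cos \<phi>' > \<rho>0 \<longrightarrow>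
     (\<forall>t\<in>{0..T}. (\<lambda>y. b y t) holomorphic_on bdom \<rho>0) \<longrightarrow>
     \<alpha> > 0 \<longrightarrow>
     (\<forall>t\<in>{0..T}. \<forall>y\<in>bdom \<rho>0. cmod (y powr of_real \<alpha> * b y t) < A) \<longrightarrow>
     F \<in> A_space \<phi> T \<nu> \<longrightarrow> h \<in> A_space \<phi> T \<nu> \<longrightarrow>
     j \<le> 3 \<longrightarrow> \<nu> > 2 * \<rho>0 + 1 \<longrightarrow>
     p \<in> sector \<phi> \<longrightarrow> 0 \<le> t \<longrightarrow> t \<le> T \<longrightarrow>
     ennreal (cmod (integral {0..t} (\<lambda>\<tau>.
         (lconv (\<lambda>s \<tau>. s ^ j * (F s \<tau> + h s \<tau>)) (Bfun b c \<phi>') p \<tau>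
          - lconv (\<lambda>s \<tau>. s ^ j * F s \<tau>) (Bfun b c \<phi>') p \<tau>)
         * exp (- (p ^ 3) * of_real (t - \<tau>)))))
     \<le> ennreal (C * T powr ((3 - real j) / 3) * exp (\<nu> * cmod p) / (M0 * (1 + (cmod p)\<^sup>2)))
        * nnorm_e \<phi> T \<nu> (abs_conv (Bfun b c \<phi>') h)"
proof (intro exI[of _ "1 / cos (3 * \<phi>)"] allI impI, goal_cases)
  case (1 T \<rho>0 \<phi>' c b \<alpha> A F h j \<nu> p t)
  have B: "(\<lambda>q. Bfun b c \<phi>' q \<tau>) \<in> borel_measurable borel" if "\<tau> \<in> {0..T}" for \<tau>
    using 1 that assms by (intro borel_measurable_Bfun[of b \<tau> \<rho>0]) auto
  from 1 show ?case
    by (intro norm_integral_lconv_diff_le[OF assms _ _ _ _ _ B]) (auto simp: A_space_def)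
qed

end
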